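(* For every integer $r\ge 3$ and every integer $s$ with $3\le s\le 2r$, there exists an $r$-uniform linear hypertree $H$ with $\Delta(H)=s$ and $\hat{n}(H)=0$.
   Context: All hypergraphs are finite, simple (if $e\subseteq e'$ are hyperedges then $e=e'$) and have no loops; isolated vertices are allowed. $H$ is $r$-uniform if every hyperedge has exactly $r$ vertices. The degree of a vertex is the number of hyperedges containing it, and $\Delta(H)$ is the maximum degree. $H$ is linear if $|e\cap e'|\le 1$ for all distinct hyperedges $e,e'$. $H$ is a hypertree if there is a tree $T$ with $V(T)=V(H)$ such that for every hyperedge $e$ the induced subgraph $T[e]$ is connected. A digraph has arcs $(u,v)$ with no pair of opposite arcs; it is acyclic if it has no directed cycle. For a digraph $D$, $N^-_D(v)=\{u:(u,v)\in A(D)\}$ and $N^+_D(v)=\{u:(v,u)\in A(D)\}$. The niche hypergraph $NH(D)$ of an acyclic digraph $D$ has vertex set $V(D)$ and hyperedge set $\{e\subseteq V(D): |e|\ge 2 \text{ and } e=N^-_D(v) \text{ or } e=N^+_D(v) \text{ for some } v\in V(D)\}$. The niche number $\hat n(H)$ is the minimum $k\ge 0$ such that $H$ together with $k$ additional isolated vertices is the niche hypergraph of an acyclic digraph ($\infty$ if no such $k$ exists). *)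

theory Defs
  imports Main "HOL-Library.Extended_Nat"
begin

definition hypergraph :: "'a set \<Rightarrow> 'a set set \<Rightarrow> bool" where
  "hypergraph V E \<longleftrightarrow> finite V \<and> (\<forall>e\<in>E. e \<subseteq> V \<and> card e \<ge> 2)
     \<and> (\<forall>e\<in>E. \<forall>e'\<in>E. e \<subseteq> e' \<longrightarrow> e = e')"

definition uniform :: "nat \<Rightarrow> 'a set set \<Rightarrow> bool" where
  "uniform r E \<longleftrightarrow> (\<forall>e\<in>E. card e = r)"

definition hdegree :: "'a set set \<Rightarrow> 'a \<Rightarrow> nat" where
  "hdegree E v = card {e\<in>E. v \<in> e}"

definition max_degree :: "'a set \<Rightarrow> 'a set set \<Rightarrow> nat" where
  "max_degree V E = Max (hdegree E ` V)"

definition linear_hg :: "'a set set \<Rightarrow> bool" where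
  "linear_hg E \<longleftrightarrow> (\<forall>e\<in>E. \<forall>e'\<in>E. e \<noteq> e' \<longrightarrow> card (e \<inter> e') \<le> 1)"

definition ugraph :: "'a set \<Rightarrow> 'a set set \<Rightarrow> bool" where
  "ugraph V T \<longleftrightarrow> (\<forall>f\<in>T. \<exists>u v. u \<noteq> v \<and> u \<in> V \<and> v \<in> V \<and> f = {u, v})"

definition adj_on :: "'a set set \<Rightarrow> 'a set \<Rightarrow> ('a \<times> 'a) set" where
  "adj_on T S = {(u, v). u \<in> S \<and> v \<in> S \<and> {u, v} \<in> T}"

definition connected_on :: "'a set set \<Rightarrow> 'a set \<Rightarrow> bool" where
  "connected_on T S \<longleftrightarrow> (\<forall>u\<in>S. \<forall>v\<in>S. (u, v) \<in> (adj_on T S)\<^sup>*)"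

text \<open>A tree: a connected graph without cycles; acyclicity is expressed as every edge
  being a bridge (removing edge {u,v} disconnects u from v).\<close>
definition is_tree :: "'a set \<Rightarrow> 'a set set \<Rightarrow> bool" where
  "is_tree V T \<longleftrightarrow> ugraph V T \<and> connected_on T V
     \<and> (\<forall>u v. {u, v} \<in> T \<longrightarrow> u \<noteq> v \<longrightarrow> (u, v) \<notin> (adj_on (T - {{u, v}}) V)\<^sup>*)"

definition hypertree :: "'a set \<Rightarrow> 'a set set \<Rightarrow> bool" where
  "hypertree V E \<longleftrightarrow> (\<exists>T. is_tree V T \<and> (\<forall>e\<in>E. connected_on T e))"

text \<open>A digraph (V, A): arcs between vertices of V, no pair of opposite arcs
  (in particular no loops).\<close>
definition digraph :: "'a set \<Rightarrow> ('a \<times> 'a) set \<Rightarrow> bool" where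
  "digraph V A \<longleftrightarrow> A \<subseteq> V \<times> V \<and> (\<forall>u v. (u, v) \<in> A \<longrightarrow> (v, u) \<notin> A)"

definition acyclic_digraph :: "'a set \<Rightarrow> ('a \<times> 'a) set \<Rightarrow> bool" where
  "acyclic_digraph V A \<longleftrightarrow> digraph V A \<and> acyclic A"

definition in_nbrs :: "('a \<times> 'a) set \<Rightarrow> 'a \<Rightarrow> 'a set" where
  "in_nbrs A v = {u. (u, v) \<in> A}"

definition out_nbrs :: "('a \<times> 'a) set \<Rightarrow> 'a \<Rightarrow> 'a set" where
  "out_nbrs A v = {u. (v, u) \<in> A}"

definition niche_edges :: "'a set \<Rightarrow> ('a \<times> 'a) set \<Rightarrow> 'a set set" where
  "niche_edges V A = {e. e \<subseteq> V \<and> card e \<ge> 2 \<and>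
      (\<exists>v\<in>V. e = in_nbrs A v \<or> e = out_nbrs A v)}"

text \<open>(V, E) together with k additional isolated vertices is the niche hypergraph of an
  acyclic digraph.\<close>
definition niche_realizable :: "'a set \<Rightarrow> 'a set set \<Rightarrow> nat \<Rightarrow> bool" where
  "niche_realizable V E k \<longleftrightarrow> (\<exists>I A. finite I \<and> card I = k \<and> I \<inter> V = {} \<and>
      acyclic_digraph (V \<union> I) A \<and> niche_edges (V \<union> I) A = E)"

definition niche_number :: "'a set \<Rightarrow> 'a set set \<Rightarrow> enat" where
  "niche_number V E = (if \<exists>k. niche_realizable V E k
      then enat (LEAST k. niche_realizable V E k) else \<infinity>)"

end

theory Submission
  imports Defs "HOL-Library.Nat_Bijection"
begin

(* Split s = a + b with a, b \<le> r.  Take a hub with in-neighbours u_0, ..., u_(r-1) and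
   out-neighbours w_0, ..., w_(r-1); these two neighbourhoods are hyperedges avoiding the hub.  For
   i < a give w_i r - 1 private further in-neighbours, and for i < b give u_i r - 1 private further
   out-neighbours: the in-neighbourhood of w_i resp. the out-neighbourhood of u_i is then a
   hyperedge consisting of the hub and r - 1 new vertices, and every other neighbourhood has at
   most one vertex.  Distinct hyperedges meet at most in the hub, so the hypergraph is linear, the
   hub has degree a + b = s and every other vertex degree at most 1.  Arcs increase a rank
   function, so the digraph is acyclic.  Joining w_0, u_0 and all new vertices to the hub, and
   every other w_j resp. u_j to w_0 resp. u_0, gives a tree in which every hyperedge induces a
   star. *)

lemma acyclic_digraph_if_rank_increasing:
  fixes rank :: "'a \<Rightarrow> nat"
  assumes "A \<subseteq> V \<times> V" and rank: "\<And>p q. (p, q) \<in> A \<Longrightarrow> rank p < rank q"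
  shows "acyclic_digraph V A"
proof -
  have "rank p < rank q" if "(p, q) \<in> A\<^sup>+" for p q
    using that by (induction rule: trancl_induct) (auto dest: rank)
  then show ?thesis
    using assms unfolding acyclic_digraph_def digraph_def acyclic_def
    by (metis less_asym)
qed

lemma niche_number_eq_0I:
  assumes "acyclic_digraph V A" and "niche_edges V A = E"
  shows "niche_number V E = 0"
proof -
  have "niche_realizable V E 0"
    unfolding niche_realizable_def using assms by (intro exI[of _ "{}"] exI[of _ A]) simp
  then show ?thesis by (auto simp: niche_number_def zero_enat_def)
qed

lemma uniform_hypergraph:
  assumes "finite V" and sub: "\<And>e. e \<in> E \<Longrightarrow> e \<subseteq> V" and "uniform r E" and "r \<ge> 2"
  shows "hypergraph V E"
proof -
  have "e = e'" if "e \<in> E" "e' \<in> E" "e \<subseteq> e'" for e e'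
  proof (rule card_subset_eq)
    show "finite e'" using sub[OF \<open>e' \<in> E\<close>] \<open>finite V\<close> by (rule finite_subset)
    show "card e = card e'" using that \<open>uniform r E\<close> by (simp add: uniform_def)
  qed fact
  then show ?thesis
    using assms unfolding hypergraph_def uniform_def by auto
qed

lemma card_le_1_if_subset_singleton: "A \<subseteq> {x} \<Longrightarrow> card A \<le> 1"
  using card_mono[of "{x}" A] by simp

lemma linear_hg_if_meet_in_point:
  assumes "\<And>e e'. e \<in> E \<Longrightarrow> e' \<in> E \<Longrightarrow> e \<noteq> e' \<Longrightarrow> e \<inter> e' \<subseteq> {x}"
  shows "linear_hg E"
  unfolding linear_hg_def by (intro ballI impI card_le_1_if_subset_singleton[of _ x] assms)

lemma hdegree_le_1_if_meet_in_point:
  assumes "finite E" and meet: "\<And>e e'. e \<in> E \<Longrightarrow> e' \<in> E \<Longrightarrow> e \<noteq> e' \<Longrightarrow> e \<inter> e' \<subseteq> {x}"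
    and "v \<noteq> x"
  shows "hdegree E v \<le> 1"
proof -
  have "e = e'" if "e \<in> {e \<in> E. v \<in> e}" "e' \<in> {e \<in> E. v \<in> e}" for e e'
    using that meet[of e e'] \<open>v \<noteq> x\<close> by blast
  then show ?thesis
    unfolding hdegree_def using \<open>finite E\<close> by (simp add: card_le_Suc0_iff_eq)
qed

lemma max_degree_eqI:
  assumes "finite V" and "x \<in> V" and "\<And>v. v \<in> V \<Longrightarrow> hdegree E v \<le> hdegree E x"
  shows "max_degree V E = hdegree E x"
  unfolding max_degree_def by (rule Max_eqI) (use assms in auto)

lemma adj_on_rtrancl_sym: "(u, v) \<in> (adj_on T S)\<^sup>* \<Longrightarrow> (v, u) \<in> (adj_on T S)\<^sup>*"
proof -
  have "sym (adj_on T S)" by (auto simp: sym_def adj_on_def insert_commute)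
  then show "(u, v) \<in> (adj_on T S)\<^sup>* \<Longrightarrow> (v, u) \<in> (adj_on T S)\<^sup>*"
    by (metis sym_rtrancl symD)
qed

lemma connected_on_star:
  assumes "c \<in> S" and "\<And>v. v \<in> S \<Longrightarrow> v \<noteq> c \<Longrightarrow> {v, c} \<in> T"
  shows "connected_on T S"
proof -
  have "(v, c) \<in> (adj_on T S)\<^sup>*" if "v \<in> S" for v
    using that assms by (cases "v = c") (auto simp: adj_on_def)
  then show ?thesis
    unfolding connected_on_def by (meson adj_on_rtrancl_sym rtrancl_trans)
qed

locale parent_map =
  fixes V :: "'a set" and root :: 'a and parent :: "'a \<Rightarrow> 'a" and height :: "'a \<Rightarrow> nat"
  assumes root_in: "root \<in> V"
    and parent_in: "\<And>v. v \<in> V \<Longrightarrow> v \<noteq> root \<Longrightarrow> parent v \<in> V"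
    and height_parent_less: "\<And>v. v \<in> V \<Longrightarrow> v \<noteq> root \<Longrightarrow> height (parent v) < height v"
begin

definition tree_edges :: "'a set set" where
  "tree_edges = {{v, parent v} | v. v \<in> V \<and> v \<noteq> root}"

definition parent_rel :: "('a \<times> 'a) set" where
  "parent_rel = {(v, parent v) | v. v \<in> V \<and> v \<noteq> root}"

lemma ugraph_tree_edges: "ugraph V tree_edges"
proof -
  have "v \<noteq> parent v" if "v \<in> V" "v \<noteq> root" for v
    using height_parent_less[OF that] by auto
  then show ?thesis
    unfolding ugraph_def tree_edges_def using parent_in by blast
qed

lemma reaches_root: "v \<in> V \<Longrightarrow> (v, root) \<in> (adj_on tree_edges V)\<^sup>*"
proof (induction "height v" arbitrary: v rule: less_induct)
  case (less v)
  show ?case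
  proof (cases "v = root")
    case False
    then have "(v, parent v) \<in> adj_on tree_edges V"
      using less.prems parent_in unfolding adj_on_def tree_edges_def by auto
    moreover have "(parent v, root) \<in> (adj_on tree_edges V)\<^sup>*"
      using less False parent_in height_parent_less by blast
    ultimately show ?thesis by (rule converse_rtrancl_into_rtrancl)
  qed simp
qed

lemma connected_tree_edges: "connected_on tree_edges V"
proof -
  have "(root, v) \<in> (adj_on tree_edges V)\<^sup>*" if "v \<in> V" for v
    using reaches_root[OF that] by (rule adj_on_rtrancl_sym)
  then show ?thesis
    unfolding connected_on_def using reaches_root by (meson rtrancl_trans)
qed

lemma height_parent_rel_mono: "(p, q) \<in> parent_rel\<^sup>* \<Longrightarrow> height q \<le> height p"
  by (induction rule: rtrancl_induct) (auto simp: parent_rel_def dest: height_parent_less)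

text \<open>Removing the edge from c to its parent, the descendants of c are closed under adjacency,
  and they contain c but not its parent.\<close>

lemma parent_edge_is_bridge:
  assumes c: "c \<in> V" "c \<noteq> root"
  shows "(c, parent c) \<notin> (adj_on (tree_edges - {{c, parent c}}) V)\<^sup>*"
proof
  define D where "D = {v. (v, c) \<in> parent_rel\<^sup>*}"
  let ?R = "adj_on (tree_edges - {{c, parent c}}) V"
  have parent_notin: "parent c \<notin> D"
    using height_parent_rel_mono height_parent_less[OF c] by (fastforce simp: D_def)
  have D_iff: "v \<in> D \<longleftrightarrow> parent v \<in> D" if "v \<in> V" "v \<noteq> root" "v \<noteq> c" for v
  proof
    assume "v \<in> D"
    then have "(v, c) \<in> parent_rel\<^sup>*" by (simp add: D_def)
    then show "parent v \<in> D"
      using \<open>v \<noteq> c\<close> by (cases rule: converse_rtranclE) (auto simp: D_def parent_rel_def)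
  next
    assume "parent v \<in> D"
    moreover have "(v, parent v) \<in> parent_rel" using that by (auto simp: parent_rel_def)
    ultimately show "v \<in> D" by (auto simp: D_def intro: converse_rtrancl_into_rtrancl)
  qed
  have closed: "y \<in> D \<longleftrightarrow> z \<in> D" if "(y, z) \<in> ?R" for y z
  proof -
    have "{y, z} \<in> tree_edges" and ne: "{y, z} \<noteq> {c, parent c}"
      using that by (auto simp: adj_on_def)
    then obtain d where d: "d \<in> V" "d \<noteq> root" "{y, z} = {d, parent d}"
      by (auto simp: tree_edges_def)
    with ne have "d \<noteq> c" by auto
    with d D_iff show ?thesis by (auto simp: doubleton_eq_iff)
  qed
  assume "(c, parent c) \<in> ?R\<^sup>*"
  then have "parent c \<in> D"
    by (induction rule: rtrancl_induct) (auto simp: D_def dest: closed)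
  with parent_notin show False ..
qed

lemma is_tree_tree_edges: "is_tree V tree_edges"
  unfolding is_tree_def
proof (intro conjI allI impI ugraph_tree_edges connected_tree_edges)
  fix x y assume "{x, y} \<in> tree_edges"
  then obtain c where c: "c \<in> V" "c \<noteq> root" and xy: "{x, y} = {c, parent c}"
    unfolding tree_edges_def by blast
  have "(c, parent c) \<notin> (adj_on (tree_edges - {{x, y}}) V)\<^sup>*"
    using parent_edge_is_bridge[OF c] unfolding xy .
  moreover have "x = c \<and> y = parent c \<or> x = parent c \<and> y = c"
    using xy by (simp add: doubleton_eq_iff)
  ultimately show "(x, y) \<notin> (adj_on (tree_edges - {{x, y}}) V)\<^sup>*"
    by (metis adj_on_rtrancl_sym)
qed

lemma connected_on_parent_star:
  assumes "c \<in> S" and "\<And>v. v \<in> S \<Longrightarrow> v \<noteq> c \<Longrightarrow> v \<in> V \<and> v \<noteq> root \<and> parent v = c"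
  shows "connected_on tree_edges S"
proof (rule connected_on_star[OF \<open>c \<in> S\<close>])
  fix v assume "v \<in> S" "v \<noteq> c"
  with assms(2) show "{v, c} \<in> tree_edges"
    unfolding tree_edges_def by force
qed

end

definition hub :: nat where "hub = prod_encode (0, 0)"
definition wv :: "nat \<Rightarrow> nat" where "wv i = prod_encode (1, i)"
definition uv :: "nat \<Rightarrow> nat" where "uv i = prod_encode (2, i)"
definition wleaf :: "nat \<Rightarrow> nat \<Rightarrow> nat" where "wleaf i t = prod_encode (3, prod_encode (i, t))"
definition uleaf :: "nat \<Rightarrow> nat \<Rightarrow> nat" where "uleaf i t = prod_encode (4, prod_encode (i, t))"

lemmas vertex_defs = hub_def wv_def uv_def wleaf_def uleaf_def

definition Wv :: "nat \<Rightarrow> nat set" where "Wv r = wv ` {..<r}"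
definition Uv :: "nat \<Rightarrow> nat set" where "Uv r = uv ` {..<r}"
definition wfan :: "nat \<Rightarrow> nat \<Rightarrow> nat set" where "wfan r i = insert hub (wleaf i ` {..<r - 1})"
definition ufan :: "nat \<Rightarrow> nat \<Rightarrow> nat set" where "ufan r i = insert hub (uleaf i ` {..<r - 1})"

lemmas fan_set_defs = Wv_def Uv_def wfan_def ufan_def

definition fan_vertices :: "nat \<Rightarrow> nat \<Rightarrow> nat \<Rightarrow> nat set" where
  "fan_vertices r a b = insert hub (Wv r \<union> Uv r \<union> (\<Union>i<a. wfan r i) \<union> (\<Union>i<b. ufan r i))"

definition fan_edges :: "nat \<Rightarrow> nat \<Rightarrow> nat \<Rightarrow> nat set set" where
  "fan_edges r a b = {Wv r, Uv r} \<union> wfan r ` {..<a} \<union> ufan r ` {..<b}"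

definition fan_arcs :: "nat \<Rightarrow> nat \<Rightarrow> nat \<Rightarrow> (nat \<times> nat) set" where
  "fan_arcs r a b = {(uv i, hub) | i. i < r} \<union> {(hub, wv i) | i. i < r}
     \<union> {(wleaf i t, wv i) | i t. i < a \<and> t < r - 1} \<union> {(uv i, uleaf i t) | i t. i < b \<and> t < r - 1}"

lemma vertex_neq_hub [simp]: "wv i \<noteq> hub" "uv i \<noteq> hub" "wleaf i t \<noteq> hub" "uleaf i t \<noteq> hub"
  by (simp_all add: vertex_defs)


lemma fan_vertices_cases [consumes 1, case_names hub wv uv wleaf uleaf]:
  assumes "v \<in> fan_vertices r a b"
  obtains "v = hub" | i where "v = wv i" "i < r" | i where "v = uv i" "i < r"
    | i t where "v = wleaf i t" "i < a" "t < r - 1" | i t where "v = uleaf i t" "i < b" "t < r - 1"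
  using assms unfolding fan_vertices_def fan_set_defs by blast

lemma in_fan_vertices [simp]:
  "hub \<in> fan_vertices r a b"
  "i < r \<Longrightarrow> wv i \<in> fan_vertices r a b" "i < r \<Longrightarrow> uv i \<in> fan_vertices r a b"
  "i < a \<Longrightarrow> t < r - 1 \<Longrightarrow> wleaf i t \<in> fan_vertices r a b"
  "i < b \<Longrightarrow> t < r - 1 \<Longrightarrow> uleaf i t \<in> fan_vertices r a b"
  by (auto simp: fan_vertices_def fan_set_defs)

lemma finite_fan_vertices: "finite (fan_vertices r a b)"
  by (simp add: fan_vertices_def fan_set_defs)

lemma finite_fan_edges: "finite (fan_edges r a b)"
  by (simp add: fan_edges_def)

lemma fan_edges_subset: "e \<in> fan_edges r a b \<Longrightarrow> e \<subseteq> fan_vertices r a b"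
  by (auto simp: fan_edges_def fan_vertices_def)

lemma uniform_fan_edges:
  assumes "r \<ge> 1" shows "uniform r (fan_edges r a b)"
proof -
  have "card (Wv r) = r" "card (Uv r) = r" "card (wfan r i) = r" "card (ufan r i) = r" for i
    using assms by (auto simp: fan_set_defs card_image card_insert_if inj_on_def vertex_defs)
  then show ?thesis by (auto simp: uniform_def fan_edges_def)
qed

lemma hypergraph_fan:
  "r \<ge> 2 \<Longrightarrow> hypergraph (fan_vertices r a b) (fan_edges r a b)"
  by (rule uniform_hypergraph[OF finite_fan_vertices fan_edges_subset uniform_fan_edges]) auto

lemma fan_edges_meet_at_hub:
  "e \<in> fan_edges r a b \<Longrightarrow> e' \<in> fan_edges r a b \<Longrightarrow> e \<noteq> e' \<Longrightarrow> e \<inter> e' \<subseteq> {hub}"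
  by (auto simp: fan_edges_def fan_set_defs vertex_defs)

lemma wleaf_in_wfan: "r \<ge> 2 \<Longrightarrow> wleaf i 0 \<in> wfan r j \<longleftrightarrow> i = j"
  by (auto simp: wfan_def vertex_defs)

lemma wleaf_notin_ufan: "wleaf i 0 \<notin> ufan r j"
  by (auto simp: ufan_def vertex_defs)

lemma uleaf_in_ufan: "r \<ge> 2 \<Longrightarrow> uleaf i 0 \<in> ufan r j \<longleftrightarrow> i = j"
  by (auto simp: ufan_def vertex_defs)

lemma wfan_eq_iff: "r \<ge> 2 \<Longrightarrow> wfan r i = wfan r j \<longleftrightarrow> i = j"
  by (metis wleaf_in_wfan)

lemma ufan_eq_iff: "r \<ge> 2 \<Longrightarrow> ufan r i = ufan r j \<longleftrightarrow> i = j"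
  by (metis uleaf_in_ufan)

lemma wfan_neq_ufan: "r \<ge> 2 \<Longrightarrow> wfan r i \<noteq> ufan r j"
  by (metis wleaf_in_wfan wleaf_notin_ufan)

lemma hdegree_hub:
  assumes "r \<ge> 2" shows "hdegree (fan_edges r a b) hub = a + b"
proof -
  have "{e \<in> fan_edges r a b. hub \<in> e} = wfan r ` {..<a} \<union> ufan r ` {..<b}"
    by (auto simp: fan_edges_def fan_set_defs vertex_defs)
  moreover have "wfan r ` {..<a} \<inter> ufan r ` {..<b} = {}"
    using wfan_neq_ufan[OF assms] by blast
  ultimately show ?thesis
    using assms by (simp add: hdegree_def card_Un_disjoint card_image inj_on_def wfan_eq_iff ufan_eq_iff)
qed

lemma max_degree_fan:
  assumes "r \<ge> 2" and "a + b \<ge> 1"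
  shows "max_degree (fan_vertices r a b) (fan_edges r a b) = a + b"
proof -
  have "hdegree (fan_edges r a b) v \<le> hdegree (fan_edges r a b) hub" for v
  proof (cases "v = hub")
    case False
    with finite_fan_edges fan_edges_meet_at_hub have "hdegree (fan_edges r a b) v \<le> 1"
      by (rule hdegree_le_1_if_meet_in_point)
    with assms show ?thesis by (simp add: hdegree_hub)
  qed simp
  then show ?thesis
    using max_degree_eqI[OF finite_fan_vertices in_fan_vertices(1)] hdegree_hub[OF assms(1)] by simp
qed

definition fan_parent :: "nat \<Rightarrow> nat" where
  "fan_parent v = (if \<exists>j>0. v = wv j then wv 0 else if \<exists>j>0. v = uv j then uv 0 else hub)"

lemma fan_parent_simps [simp]:
  "fan_parent hub = hub"
  "fan_parent (wv i) = (if i = 0 then hub else wv 0)"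
  "fan_parent (uv i) = (if i = 0 then hub else uv 0)"
  "fan_parent (wleaf i t) = hub" "fan_parent (uleaf i t) = hub"
  by (auto simp: fan_parent_def vertex_defs)

definition fan_height :: "nat \<Rightarrow> nat" where
  "fan_height v = (if v = hub then 0 else if fan_parent v = hub then 1 else 2)"

lemma hypertree_fan:
  assumes "r \<ge> 1" shows "hypertree (fan_vertices r a b) (fan_edges r a b)"
proof -
  interpret parent_map "fan_vertices r a b" hub fan_parent fan_height
  proof
    fix v assume "v \<in> fan_vertices r a b" "v \<noteq> hub"
    then show "fan_parent v \<in> fan_vertices r a b"
      by (cases rule: fan_vertices_cases) auto
    from \<open>v \<in> fan_vertices r a b\<close> \<open>v \<noteq> hub\<close> show "fan_height (fan_parent v) < fan_height v"
      by (cases rule: fan_vertices_cases) (auto simp: fan_height_def)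
  qed simp
  have "connected_on tree_edges e" if "e \<in> fan_edges r a b" for e
  proof -
    from that consider "e = Wv r" | "e = Uv r" | i where "e = wfan r i" "i < a"
      | i where "e = ufan r i" "i < b"
      by (auto simp: fan_edges_def)
    then show ?thesis
    proof cases
      case 1
      show ?thesis unfolding 1
        by (rule connected_on_parent_star[of "wv 0"]) (use assms in \<open>auto simp: Wv_def\<close>)
    next
      case 2
      show ?thesis unfolding 2
        by (rule connected_on_parent_star[of "uv 0"]) (use assms in \<open>auto simp: Uv_def\<close>)
    next
      case 3
      show ?thesis unfolding 3(1)
        by (rule connected_on_parent_star[of hub]) (use 3 in \<open>auto simp: wfan_def\<close>)
    next
      case 4
      show ?thesis unfolding 4(1)
        by (rule connected_on_parent_star[of hub]) (use 4 in \<open>auto simp: ufan_def\<close>)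
    qed
  qed
  then show ?thesis unfolding hypertree_def using is_tree_tree_edges by blast
qed

definition fan_rank :: "nat \<Rightarrow> nat" where
  "fan_rank v = (if v = hub then 1 else if (\<exists>i. v = wv i) \<or> (\<exists>i t. v = uleaf i t) then 2 else 0)"

lemma acyclic_digraph_fan:
  assumes "a \<le> r" and "b \<le> r"
  shows "acyclic_digraph (fan_vertices r a b) (fan_arcs r a b)"
proof (rule acyclic_digraph_if_rank_increasing[where rank = fan_rank])
  show "fan_arcs r a b \<subseteq> fan_vertices r a b \<times> fan_vertices r a b"
    using assms by (auto simp: fan_arcs_def fan_vertices_def fan_set_defs)
  show "fan_rank p < fan_rank q" if "(p, q) \<in> fan_arcs r a b" for p q
    using that by (auto simp: fan_arcs_def fan_rank_def vertex_defs)
qed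

lemma fan_nbrs:
  "in_nbrs (fan_arcs r a b) hub = Uv r" "out_nbrs (fan_arcs r a b) hub = Wv r"
  "i < r \<Longrightarrow> in_nbrs (fan_arcs r a b) (wv i) = (if i < a then wfan r i else {hub})"
  "out_nbrs (fan_arcs r a b) (wv i) = {}" "in_nbrs (fan_arcs r a b) (uv i) = {}"
  "i < r \<Longrightarrow> out_nbrs (fan_arcs r a b) (uv i) = (if i < b then ufan r i else {hub})"
  by (auto simp: in_nbrs_def out_nbrs_def fan_arcs_def fan_set_defs vertex_defs)

lemma leaf_nbrs_subset:
  "in_nbrs (fan_arcs r a b) (wleaf i t) \<subseteq> {wv i}" "out_nbrs (fan_arcs r a b) (wleaf i t) \<subseteq> {wv i}"
  "in_nbrs (fan_arcs r a b) (uleaf i t) \<subseteq> {uv i}" "out_nbrs (fan_arcs r a b) (uleaf i t) \<subseteq> {uv i}"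
  by (auto simp: in_nbrs_def out_nbrs_def fan_arcs_def vertex_defs)

lemma niche_edges_fan:
  assumes "r \<ge> 2" and "a \<le> r" and "b \<le> r"
  shows "niche_edges (fan_vertices r a b) (fan_arcs r a b) = fan_edges r a b"
proof
  let ?V = "fan_vertices r a b" and ?A = "fan_arcs r a b"
  show "niche_edges ?V ?A \<subseteq> fan_edges r a b"
  proof
    fix e assume "e \<in> niche_edges ?V ?A"
    then obtain v where e: "card e \<ge> 2" and v: "v \<in> ?V"
      and ev: "e = in_nbrs ?A v \<or> e = out_nbrs ?A v"
      by (auto simp: niche_edges_def)
    from v show "e \<in> fan_edges r a b"
    proof (cases rule: fan_vertices_cases)
      case (wleaf i t)
      then have "e \<subseteq> {wv i}" using ev leaf_nbrs_subset(1,2) by blast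
      with e show ?thesis using card_le_1_if_subset_singleton by fastforce
    next
      case (uleaf i t)
      then have "e \<subseteq> {uv i}" using ev leaf_nbrs_subset(3,4) by blast
      with e show ?thesis using card_le_1_if_subset_singleton by fastforce
    qed (use ev e in \<open>auto simp: fan_nbrs fan_edges_def split: if_splits\<close>)
  qed
  show "fan_edges r a b \<subseteq> niche_edges ?V ?A"
  proof
    fix e assume e: "e \<in> fan_edges r a b"
    then have "e \<subseteq> ?V" "card e \<ge> 2"
      using hypergraph_fan[OF assms(1)] by (auto simp: hypergraph_def)
    moreover have "\<exists>v\<in>?V. e = in_nbrs ?A v \<or> e = out_nbrs ?A v"
    proof -
      from e consider "e = Wv r" | "e = Uv r" | i where "e = wfan r i" "i < a"
        | i where "e = ufan r i" "i < b"
        by (auto simp: fan_edges_def)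
      then show ?thesis
      proof cases
        case 3
        then have "wv i \<in> ?V" "e = in_nbrs ?A (wv i)"
          using assms by (simp_all add: fan_nbrs)
        then show ?thesis by blast
      next
        case 4
        then have "uv i \<in> ?V" "e = out_nbrs ?A (uv i)"
          using assms by (simp_all add: fan_nbrs)
        then show ?thesis by blast
      qed (auto simp: fan_nbrs intro: bexI[of _ hub])
    qed
    ultimately show "e \<in> niche_edges ?V ?A" by (auto simp: niche_edges_def)
  qed
qed

theorem theorem3:
  fixes r s :: nat
  assumes "r \<ge> 3" and "3 \<le> s" and "s \<le> 2 * r"
  shows "\<exists>(V :: nat set) E. hypergraph V E \<and> uniform r E \<and> linear_hg E \<and> hypertree V E
           \<and> max_degree V E = s \<and> niche_number V E = 0"
proof -
  define a where "a = min s r"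
  define b where "b = s - a"
  have r: "r \<ge> 2" and ab: "a \<le> r" "b \<le> r" "a + b = s" "a + b \<ge> 1"
    using assms by (auto simp: a_def b_def)
  show ?thesis
  proof (intro exI conjI)
    show "hypergraph (fan_vertices r a b) (fan_edges r a b)"
      using r by (rule hypergraph_fan)
    show "uniform r (fan_edges r a b)"
      using r by (intro uniform_fan_edges) simp
    show "linear_hg (fan_edges r a b)"
      using fan_edges_meet_at_hub by (rule linear_hg_if_meet_in_point)
    show "hypertree (fan_vertices r a b) (fan_edges r a b)"
      using r by (intro hypertree_fan) simp
    show "max_degree (fan_vertices r a b) (fan_edges r a b) = s"
      using max_degree_fan[OF r ab(4)] ab(3) by simp
    show "niche_number (fan_vertices r a b) (fan_edges r a b) = 0"
      using acyclic_digraph_fan[OF ab(1,2)] niche_edges_fan[OF r ab(1,2)]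
      by (rule niche_number_eq_0I)
  qed
qed

end
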